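(* Let $m\ge 2$ be an integer. For every positive integer $n$, consider the partitions $\lambda$ of $n$ satisfying both of the following conditions: (i) the smallest part $s$ of $\lambda$ appears fewer than $m$ times; (ii) every part of $\lambda$ that is divisible by $m$ is at most $ms$. The number of such partitions equals the number of partitions of $n$ in which every part appears fewer than $m$ times. *)

theory Defs
  imports Main "HOL-Library.Multiset"
begin

definition partitions :: "nat \<Rightarrow> nat multiset set" where
  "partitions n = {P. (\<forall>x\<in>#P. 0 < x) \<and> sum_mset P = n}"

definition smallest_part :: "nat multiset \<Rightarrow> nat" where
  "smallest_part P = Min (set_mset P)"

end

theory Submission
  imports Defs
begin

text \<open>
  Fix the smallest part \<open>s\<close>. Every integer \<open>y > s\<close> factors uniquely as \<open>y = m^e * b\<close> with an
  admissible base \<open>b\<close>, i.e. \<open>s < b\<close> and \<open>b \<le> m * s\<close> whenever \<open>m\<close> divides \<open>b\<close>: keep dividing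
  by \<open>m\<close> while the quotient stays above \<open>s\<close>. Replacing each part \<open>m^e * b\<close> by \<open>m^e\<close> copies of
  \<open>b\<close> turns a partition with all multiplicities below \<open>m\<close> into one whose parts above \<open>s\<close> are
  admissible. The map is inverted by writing the multiplicity of each admissible \<open>b\<close> in base \<open>m\<close>:
  its \<open>e\<close>-th digit is the multiplicity of \<open>m^e * b\<close>. Parts equal to \<open>s\<close> are left alone, which
  preserves both the smallest part and its multiplicity.
\<close>

section \<open>Base-\<open>m\<close> digits\<close>

definition lower_exponents :: "nat multiset \<Rightarrow> nat multiset" where
  "lower_exponents E = image_mset (\<lambda>j. j - 1) (filter_mset (\<lambda>j. 0 < j) E)"

lemma count_lower_exponents: "count (lower_exponents E) k = count E (Suc k)"
  unfolding lower_exponents_def by (induction E) (auto split: nat.split)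

lemma sum_powers_lower_exponents:
  fixes m :: nat
  shows "(\<Sum>j\<in>#E. m ^ j) = count E 0 + m * (\<Sum>j\<in>#lower_exponents E. m ^ j)"
  unfolding lower_exponents_def
proof (induction E)
  case (add x E)
  then show ?case by (cases x) (auto simp: algebra_simps)
qed simp

lemma count_eq_digit_of_sum_powers:
  fixes m :: nat
  assumes "\<forall>j. count E j < m"
  shows "count E k = (\<Sum>j\<in>#E. m ^ j) div m ^ k mod m"
  using assms
proof (induction k arbitrary: E)
  case 0
  then show ?case using sum_powers_lower_exponents[of m E] by simp
next
  case (Suc k)
  have "\<forall>j. count (lower_exponents E) j < m"
    using Suc.prems by (simp add: count_lower_exponents)
  then have "count E (Suc k) = (\<Sum>j\<in>#lower_exponents E. m ^ j) div m ^ k mod m"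
    using Suc.IH[of "lower_exponents E"] by (simp add: count_lower_exponents)
  moreover have "(\<Sum>j\<in>#E. m ^ j) div m = (\<Sum>j\<in>#lower_exponents E. m ^ j)"
    using sum_powers_lower_exponents[of m E] Suc.prems[rule_format, of 0] by simp
  ultimately show ?case
    by (simp add: div_mult2_eq)
qed

lemma eq_if_digits_eq:
  fixes a b m :: nat
  assumes "1 < m" and "\<forall>k. a div m ^ k mod m = b div m ^ k mod m"
  shows "a = b"
  using assms(2)
proof (induction "a + b" arbitrary: a b rule: less_induct)
  case less
  show ?case
  proof (cases "a + b = 0")
    case False
    have "\<forall>k. a div m div m ^ k mod m = b div m div m ^ k mod m"
      using less.prems by (metis div_mult2_eq power_Suc)
    moreover have "a div m + b div m < a + b"
      using False assms(1) div_le_dividend[of a m] div_le_dividend[of b m]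
        div_less_dividend[of m a] div_less_dividend[of m b] by linarith
    ultimately have "a div m = b div m"
      using less.hyps by blast
    moreover have "a mod m = b mod m"
      using less.prems[rule_format, of 0] by simp
    ultimately show ?thesis
      by (metis div_mult_mod_eq)
  qed simp
qed

section \<open>Factoring a part over the smallest part\<close>

definition admissible_base :: "nat \<Rightarrow> nat \<Rightarrow> nat \<Rightarrow> bool" where
  "admissible_base m s b \<longleftrightarrow> s < b \<and> (m dvd b \<longrightarrow> b \<le> m * s)"

function reduce_exp :: "nat \<Rightarrow> nat \<Rightarrow> nat \<Rightarrow> nat" where
  "reduce_exp m s y = (if 1 < m \<and> m dvd y \<and> m * s < y then Suc (reduce_exp m s (y div m)) else 0)"
  by auto
termination by (relation "measure (\<lambda>(m, s, y). y)") auto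

declare reduce_exp.simps [simp del]

definition reduce_base :: "nat \<Rightarrow> nat \<Rightarrow> nat \<Rightarrow> nat" where
  "reduce_base m s y = y div m ^ reduce_exp m s y"

lemma reduce_base_factorization:
  assumes "1 < m" and "s < y"
  shows "admissible_base m s (reduce_base m s y) \<and> y = m ^ reduce_exp m s y * reduce_base m s y"
  using assms
proof (induction m s y rule: reduce_exp.induct)
  case (1 m s y)
  show ?case
  proof (cases "m dvd y \<and> m * s < y")
    case True
    then obtain y' where y: "y = m * y'" by blast
    then have "s < y'" and "y div m = y'"
      using True "1.prems"(1) by auto
    then have "admissible_base m s (reduce_base m s y') \<and> y' = m ^ reduce_exp m s y' * reduce_base m s y'"
      using "1.IH" "1.prems"(1) True by blast
    moreover have "reduce_exp m s y = Suc (reduce_exp m s y')"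
      using True \<open>y div m = y'\<close> "1.prems"(1) by (subst reduce_exp.simps) simp
    ultimately show ?thesis
      using y "1.prems"(1) by (simp add: reduce_base_def div_mult2_eq)
  next
    case False
    then have "reduce_exp m s y = 0"
      by (subst reduce_exp.simps) simp
    then show ?thesis
      using False "1.prems"(2) by (auto simp: reduce_base_def admissible_base_def)
  qed
qed

lemma reduce_exp_pow_mult:
  assumes "1 < m" and "admissible_base m s b"
  shows "reduce_exp m s (m ^ k * b) = k"
proof (induction k)
  case 0
  then show ?case
    using assms by (subst reduce_exp.simps) (auto simp: admissible_base_def)
next
  case (Suc k)
  have "m * s < m * b"
    using assms by (simp add: admissible_base_def)
  also have "\<dots> \<le> m ^ Suc k * b"
    using assms(1) by simp
  finally show ?case
    using Suc assms(1) by (subst reduce_exp.simps) simp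
qed

lemma reduce_base_pow_mult:
  assumes "1 < m" and "admissible_base m s b"
  shows "reduce_base m s (m ^ k * b) = b"
  using assms by (simp add: reduce_base_def reduce_exp_pow_mult)

lemma admissible_base_pow_mult_gt:
  assumes "0 < m" and "admissible_base m s b"
  shows "s < m ^ k * b"
proof -
  have "1 * b \<le> m ^ k * b"
    using assms(1) by (intro mult_le_mono1) simp
  then show ?thesis
    using assms(2) unfolding admissible_base_def by linarith
qed

section \<open>Splitting parts into admissible bases\<close>

definition split_part :: "nat \<Rightarrow> nat \<Rightarrow> nat \<Rightarrow> nat multiset" where
  "split_part m s y =
     (if y \<le> s then {#y#} else replicate_mset (m ^ reduce_exp m s y) (reduce_base m s y))"

definition split_parts :: "nat \<Rightarrow> nat \<Rightarrow> nat multiset \<Rightarrow> nat multiset" where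
  "split_parts m s Q = (\<Sum>y\<in>#Q. split_part m s y)"

definition base_exponents :: "nat \<Rightarrow> nat \<Rightarrow> nat \<Rightarrow> nat multiset \<Rightarrow> nat multiset" where
  "base_exponents m s b Q =
     image_mset (reduce_exp m s) (filter_mset (\<lambda>y. s < y \<and> reduce_base m s y = b) Q)"

lemma sum_split_parts:
  assumes "1 < m"
  shows "sum_mset (split_parts m s Q) = sum_mset Q"
proof -
  have "sum_mset (split_part m s y) = y" for y
    using reduce_base_factorization[OF assms, of s y] by (auto simp: split_part_def)
  then show ?thesis
    unfolding split_parts_def by (induction Q) auto
qed

lemma count_split_parts_le:
  assumes "1 < m" and "\<forall>y\<in>#Q. s \<le> y" and "b \<le> s"
  shows "count (split_parts m s Q) b = count Q b"
  using assms(2)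
proof (induction Q)
  case (add y Q)
  have "count (split_part m s y) b = (if y = b then 1 else 0)"
    using reduce_base_factorization[OF assms(1), of s y] add.prems assms(3)
    by (auto simp: split_part_def admissible_base_def)
  then show ?case
    using add by (simp add: split_parts_def)
qed (simp add: split_parts_def)

lemma split_parts_ge:
  assumes "1 < m" and "\<forall>y\<in>#Q. s \<le> y" and "x \<in># split_parts m s Q"
  shows "s \<le> x"
  using count_split_parts_le[OF assms(1,2), of x] assms(2,3)
  by (metis count_eq_zero_iff linorder_not_le order_less_imp_le)

lemma count_split_parts_gt:
  assumes "s < b"
  shows "count (split_parts m s Q) b = (\<Sum>k\<in>#base_exponents m s b Q. m ^ k)"
proof (induction Q)
  case (add y Q)
  have "count (split_part m s y) b = (if s < y \<and> reduce_base m s y = b then m ^ reduce_exp m s y else 0)"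
    using assms by (auto simp: split_part_def)
  then show ?case
    using add by (simp add: split_parts_def base_exponents_def)
qed (simp add: split_parts_def base_exponents_def)

lemma count_split_parts_not_admissible:
  assumes "1 < m" and "s < b" and "\<not> admissible_base m s b"
  shows "count (split_parts m s Q) b = 0"
proof -
  have "base_exponents m s b Q = {#}"
    using reduce_base_factorization[OF assms(1), of s] assms(3)
    by (auto simp: base_exponents_def filter_mset_eq_conv)
  then show ?thesis
    using count_split_parts_gt[OF assms(2)] by simp
qed

lemma count_base_exponents:
  assumes "1 < m" and "admissible_base m s b"
  shows "count (base_exponents m s b Q) k = count Q (m ^ k * b)"
proof -
  let ?F = "filter_mset (\<lambda>y. s < y \<and> reduce_base m s y = b) Q"
  have "s < m ^ k * b"
    using assms by (simp add: admissible_base_pow_mult_gt)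
  then have fiber: "reduce_exp m s -` {k} \<inter> set_mset ?F = set_mset Q \<inter> {m ^ k * b}"
    using reduce_base_factorization[OF assms(1), of s] reduce_exp_pow_mult[OF assms] reduce_base_pow_mult[OF assms]
    by auto
  have "count (base_exponents m s b Q) k = (\<Sum>y\<in>reduce_exp m s -` {k} \<inter> set_mset ?F. count ?F y)"
    unfolding base_exponents_def by (rule count_image_mset)
  also have "\<dots> = count Q (m ^ k * b)"
    unfolding fiber using \<open>s < m ^ k * b\<close> reduce_base_pow_mult[OF assms]
    by (cases "m ^ k * b \<in># Q") (auto simp: not_in_iff)
  finally show ?thesis .
qed

lemma digit_count_split_parts:
  assumes "1 < m" and "admissible_base m s b" and "\<forall>j. count Q (m ^ j * b) < m"
  shows "count (split_parts m s Q) b div m ^ k mod m = count Q (m ^ k * b)"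
proof -
  have "\<forall>j. count (base_exponents m s b Q) j < m"
    using assms by (simp add: count_base_exponents)
  then show ?thesis
    using count_split_parts_gt[of s b m Q] assms(2)
    by (simp add: admissible_base_def count_base_exponents[OF assms(1,2)] count_eq_digit_of_sum_powers[symmetric])
qed

section \<open>Merging copies of admissible bases\<close>

definition merge_count :: "nat \<Rightarrow> nat \<Rightarrow> nat multiset \<Rightarrow> nat \<Rightarrow> nat" where
  "merge_count m s P y =
     (if y \<le> s then count P y else count P (reduce_base m s y) div m ^ reduce_exp m s y mod m)"

definition merge_parts :: "nat \<Rightarrow> nat \<Rightarrow> nat multiset \<Rightarrow> nat multiset" where
  "merge_parts m s P = Abs_multiset (merge_count m s P)"

lemma finite_merge_count_support:
  assumes "1 < m"
  shows "finite {y. 0 < merge_count m s P y}"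
proof (rule finite_subset)
  let ?S = "set_mset P \<union> (\<lambda>(b, k). m ^ k * b) ` (set_mset P \<times> {..<size P})"
  show "finite ?S"
    by simp
  show "{y. 0 < merge_count m s P y} \<subseteq> ?S"
  proof
    fix y
    assume "y \<in> {y. 0 < merge_count m s P y}"
    then have pos: "0 < merge_count m s P y"
      by simp
    show "y \<in> ?S"
    proof (cases "y \<le> s")
      case True
      then show ?thesis
        using pos by (simp add: merge_count_def)
    next
      case False
      let ?b = "reduce_base m s y" and ?e = "reduce_exp m s y"
      have "0 < count P ?b div m ^ ?e mod m"
        using pos False by (simp add: merge_count_def)
      then have "0 < count P ?b div m ^ ?e"
        by (metis gr0I mod_0)
      then have "m ^ ?e \<le> count P ?b"
        by (simp add: div_greater_zero_iff)
      moreover have "0 < m ^ ?e"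
        using assms by simp
      ultimately have "?b \<in># P"
        by (meson count_greater_zero_iff less_le_trans)
      have "?e < 2 ^ ?e"
        by simp
      also have "\<dots> \<le> m ^ ?e"
        using assms by (simp add: power_mono)
      also have "\<dots> \<le> size P"
        using \<open>m ^ ?e \<le> count P ?b\<close> count_le_size[of P ?b] by linarith
      finally have "?e < size P" .
      moreover have "y = m ^ ?e * ?b"
        using reduce_base_factorization[OF assms, of s y] False by simp
      ultimately show ?thesis
        using \<open>?b \<in># P\<close> by (auto intro!: image_eqI[of _ _ "(?b, ?e)"])
    qed
  qed
qed

lemma count_merge_parts:
  assumes "1 < m"
  shows "count (merge_parts m s P) y = merge_count m s P y"
  unfolding merge_parts_def using finite_merge_count_support[OF assms] by simp

lemma merge_parts_ge:
  assumes "1 < m" and "\<forall>y\<in>#P. s \<le> y" and "x \<in># merge_parts m s P"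
  shows "s \<le> x"
proof (rule ccontr)
  assume "\<not> s \<le> x"
  then have "count (merge_parts m s P) x = count P x"
    by (simp add: count_merge_parts[OF assms(1)] merge_count_def)
  then have "x \<in># P"
    using assms(3) by (metis count_greater_zero_iff)
  then show False
    using assms(2) \<open>\<not> s \<le> x\<close> by blast
qed

lemma merge_split_parts:
  assumes "1 < m" and "\<forall>y\<in>#Q. s \<le> y" and "\<forall>y\<in>#Q. count Q y < m"
  shows "merge_parts m s (split_parts m s Q) = Q"
proof (rule multiset_eqI)
  fix y
  have small: "count Q j < m" for j
    using assms(1,3) by (cases "j \<in># Q") (auto simp: not_in_iff)
  show "count (merge_parts m s (split_parts m s Q)) y = count Q y"
  proof (cases "y \<le> s")
    case True
    then show ?thesis
      using assms by (simp add: count_merge_parts merge_count_def count_split_parts_le)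
  next
    case False
    let ?b = "reduce_base m s y" and ?e = "reduce_exp m s y"
    have "admissible_base m s ?b" and "y = m ^ ?e * ?b"
      using reduce_base_factorization[OF assms(1), of s y] False by auto
    then show ?thesis
      using False digit_count_split_parts[OF assms(1), of s ?b Q ?e] small assms(1)
      by (simp add: count_merge_parts merge_count_def)
  qed
qed

lemma split_merge_parts:
  assumes "1 < m" and "\<forall>y\<in>#P. s \<le> y" and "\<forall>y\<in>#P. s < y \<longrightarrow> admissible_base m s y"
  shows "split_parts m s (merge_parts m s P) = P"
proof (rule multiset_eqI)
  fix b
  let ?M = "merge_parts m s P"
  have ge: "\<forall>y\<in>#?M. s \<le> y"
    using merge_parts_ge[OF assms(1,2)] by blast
  consider "b \<le> s" | "s < b" "\<not> admissible_base m s b" | "admissible_base m s b"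
    by (meson admissible_base_def not_le)
  then show "count (split_parts m s ?M) b = count P b"
  proof cases
    case 1
    then show ?thesis
      using assms(1) ge by (simp add: count_split_parts_le count_merge_parts merge_count_def)
  next
    case 2
    then show ?thesis
      using assms count_split_parts_not_admissible[OF assms(1)] by (metis count_eq_zero_iff)
  next
    case 3
    have column: "count ?M (m ^ j * b) = count P b div m ^ j mod m" for j
      using 3 assms(1) admissible_base_pow_mult_gt[of m s b j]
      by (simp add: count_merge_parts merge_count_def reduce_exp_pow_mult reduce_base_pow_mult)
    then have "\<forall>j. count ?M (m ^ j * b) < m"
      using assms(1) by simp
    then have "count (split_parts m s ?M) b div m ^ k mod m = count P b div m ^ k mod m" for k
      using digit_count_split_parts[OF assms(1) 3] column by simp
    then show ?thesis
      using eq_if_digits_eq[OF assms(1)] by blast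
  qed
qed

lemma smallest_part_eqI:
  assumes "s \<in># Q" and "\<forall>y\<in>#Q. s \<le> y"
  shows "smallest_part Q = s"
  unfolding smallest_part_def using assms by (intro Min_eqI) auto

lemma smallest_part_in:
  assumes "Q \<noteq> {#}"
  shows "smallest_part Q \<in># Q"
  unfolding smallest_part_def using assms by simp

lemma smallest_part_le:
  assumes "y \<in># Q"
  shows "smallest_part Q \<le> y"
  unfolding smallest_part_def using assms by simp

lemma split_parts_partition:
  assumes m: "1 < m" and Q: "Q \<in> partitions n" "Q \<noteq> {#}" "\<forall>x\<in>#Q. count Q x < m"
  defines "s \<equiv> smallest_part Q"
  defines "P \<equiv> split_parts m s Q"
  shows "P \<in> partitions n" and "smallest_part P = s" and "count P s < m"
    and "\<forall>x\<in>#P. m dvd x \<longrightarrow> x \<le> m * s" and "merge_parts m s P = Q"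
proof -
  have ge: "\<forall>y\<in>#Q. s \<le> y"
    by (simp add: s_def smallest_part_le)
  have count_s: "count P s = count Q s"
    using count_split_parts_le[OF m ge] by (simp add: P_def)
  have "s \<in># Q" and "0 < s"
    using Q smallest_part_in[OF Q(2)] by (auto simp: s_def partitions_def)
  have ge_P: "\<forall>x\<in>#P. s \<le> x"
    using split_parts_ge[OF m ge] by (simp add: P_def)
  have "s \<in># P"
    using count_s \<open>s \<in># Q\<close> by (metis count_greater_zero_iff)
  then show "smallest_part P = s"
    using ge_P by (rule smallest_part_eqI)
  show "count P s < m"
    using count_s Q(3) \<open>s \<in># Q\<close> by simp
  show "P \<in> partitions n"
    using Q(1) ge_P \<open>0 < s\<close> sum_split_parts[OF m] by (auto simp: partitions_def P_def)
  show "\<forall>x\<in>#P. m dvd x \<longrightarrow> x \<le> m * s"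
  proof (intro ballI impI)
    fix x
    assume "x \<in># P" and "m dvd x"
    show "x \<le> m * s"
    proof (cases "s < x")
      case True
      have "admissible_base m s x"
      proof (rule ccontr)
        assume "\<not> admissible_base m s x"
        then have "count P x = 0"
          using True count_split_parts_not_admissible[OF m] by (simp add: P_def)
        then show False
          using \<open>x \<in># P\<close> not_in_iff by metis
      qed
      then show ?thesis
        using \<open>m dvd x\<close> by (simp add: admissible_base_def)
    next
      case False
      then have "x \<le> s"
        by simp
      also have "s \<le> m * s"
        using m by simp
      finally show ?thesis .
    qed
  qed
  show "merge_parts m s P = Q"
    unfolding P_def using merge_split_parts[OF m ge Q(3)] .
qed

lemma merge_parts_partition:
  assumes m: "1 < m" and P: "P \<in> partitions n" "P \<noteq> {#}"
    and "count P (smallest_part P) < m" and "\<forall>x\<in>#P. m dvd x \<longrightarrow> x \<le> m * smallest_part P"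
  defines "s \<equiv> smallest_part P"
  defines "Q \<equiv> merge_parts m s P"
  shows "Q \<in> partitions n" and "smallest_part Q = s" and "\<forall>x\<in>#Q. count Q x < m"
    and "split_parts m s Q = P"
proof -
  have ge: "\<forall>y\<in>#P. s \<le> y"
    by (simp add: s_def smallest_part_le)
  have "s \<in># P" and "0 < s"
    using P smallest_part_in[OF P(2)] by (auto simp: s_def partitions_def)
  have "\<forall>y\<in>#P. s < y \<longrightarrow> admissible_base m s y"
    using assms(5) by (auto simp: admissible_base_def s_def)
  then show split: "split_parts m s Q = P"
    unfolding Q_def using split_merge_parts[OF m ge] by blast
  have count_le: "count Q y = count P y" if "y \<le> s" for y
    using that m by (simp add: Q_def count_merge_parts merge_count_def)
  have ge_Q: "\<forall>x\<in>#Q. s \<le> x"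
    using merge_parts_ge[OF m ge] by (simp add: Q_def)
  have "s \<in># Q"
    using count_le[of s] \<open>s \<in># P\<close> by (metis count_greater_zero_iff order_refl)
  then show "smallest_part Q = s"
    using ge_Q by (rule smallest_part_eqI)
  show "Q \<in> partitions n"
    using P(1) ge_Q \<open>0 < s\<close> split sum_split_parts[OF m, of s Q] by (auto simp: partitions_def)
  show "\<forall>x\<in>#Q. count Q x < m"
  proof
    fix x
    assume "x \<in># Q"
    then have "x = s \<or> s < x"
      using ge_Q by force
    then show "count Q x < m"
      using count_le[of s] assms(4) m by (auto simp: s_def Q_def count_merge_parts merge_count_def)
  qed
qed

theorem theorem6:
  fixes m n :: nat
  assumes "m \<ge> 2" and "n \<ge> 1"
  shows "card {P \<in> partitions n.
                 count P (smallest_part P) < m \<and>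
                 (\<forall>x\<in>#P. m dvd x \<longrightarrow> x \<le> m * smallest_part P)}
       = card {P \<in> partitions n. \<forall>x\<in>#P. count P x < m}"
proof -
  have m: "1 < m"
    using assms(1) by simp
  have nonempty: "P \<noteq> {#}" if "P \<in> partitions n" for P
    using that assms(2) by (auto simp: partitions_def)
  let ?split = "\<lambda>Q. split_parts m (smallest_part Q) Q"
  let ?merge = "\<lambda>P. merge_parts m (smallest_part P) P"
  have "bij_betw ?merge
          {P \<in> partitions n. count P (smallest_part P) < m \<and>
                             (\<forall>x\<in>#P. m dvd x \<longrightarrow> x \<le> m * smallest_part P)}
          {P \<in> partitions n. \<forall>x\<in>#P. count P x < m}"
    by (rule bij_betw_byWitness[where f' = ?split])
      (use split_parts_partition[OF m _ nonempty] merge_parts_partition[OF m _ nonempty] in auto)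
  then show ?thesis
    by (rule bij_betw_same_card)
qed

end
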